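(* The axiom system $EL_{int}$ is complete with respect to the class of all topo-models: for every formula $\varphi\in\mathcal{L}_{EL_{int}}$, if $\varphi$ is valid in every topo-model, then $\varphi$ is a theorem of $EL_{int}$.
   Context: Fix a countable set $\mathit{Prop}$ of propositional variables and a finite non-empty set $\mathcal{A}$ of agents. The language $\mathcal{L}_{EL_{int}}$ is given by $\varphi ::= p \mid \neg\varphi \mid \varphi\wedge\varphi \mid K_i\varphi \mid \mathrm{int}(\varphi)$ with $p\in\mathit{Prop}$, $i\in\mathcal{A}$; $\vee,\rightarrow,\leftrightarrow$ are the usual abbreviations, $\bot := p\wedge\neg p$, $\hat K_i\varphi:=\neg K_i\neg\varphi$. Topo-models: Let $(X,\tau)$ be a topological space and write $\mathrm{Int}(A)$ for the topological interior of $A\subseteq X$. A neighbourhood function set $\Phi$ on $(X,\tau)$ is a set of partial functions $\theta$ from $X$ to the set of functions $\mathcal{A}\to\tau$ such that for all $x,y\in Dom(\theta)$, all $i\in\mathcal{A}$ and all $U\in\tau$: (1) $\theta(x)(i)\in\tau$; (2) $x\in\theta(x)(i)$; (3) $\theta(x)(i)\subseteq Dom(\theta)$; (4) if $y\in\theta(x)(i)$ then $\theta(x)(i)=\theta(y)(i)$; (5) $\theta|_U\in\Phi$, where $\theta|_U$ is the partial function with $Dom(\theta|_U)=Dom(\theta)\cap U$ and $\theta|_U(x)(i)=\theta(x)(i)\cap U$. A topo-model is $\mathcal{M}=(X,\tau,\Phi,V)$ with $(X,\tau)$ a topological space, $\Phi$ a neighbourhood function set on it, and $V$ assigning to each $p\in\mathit{Prop}$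 a subset of $X$. A neighbourhood situation is a pair $(x,\theta)$ with $\theta\in\Phi$, $x\in Dom(\theta)$. Semantics: $(x,\theta)\models p$ iff $x\in V(p)$; Boolean clauses as usual; $(x,\theta)\models K_i\varphi$ iff $(y,\theta)\models\varphi$ for all $y\in\theta(x)(i)$; $(x,\theta)\models\mathrm{int}(\varphi)$ iff $x\in\mathrm{Int}([\![\varphi]\!]^\theta)$, where $[\![\varphi]\!]^\theta=\{y\in Dom(\theta)\mid (y,\theta)\models\varphi\}$. $\varphi$ is valid in $\mathcal{M}$ if it is true at every neighbourhood situation of $\mathcal{M}$. The axiom system $EL_{int}$ has axioms: all instances of propositional tautologies; $K_i(\varphi\to\psi)\to(K_i\varphi\to K_i\psi)$; $K_i\varphi\to\varphi$; $K_i\varphi\to K_iK_i\varphi$; $\neg K_i\varphi\to K_i\neg K_i\varphi$; $\mathrm{int}(\varphi\to\psi)\to(\mathrm{int}(\varphi)\to\mathrm{int}(\psi))$; $\mathrm{int}(\varphi)\to\varphi$; $\mathrm{int}(\varphi)\to\mathrm{int}(\mathrm{int}(\varphi))$; $K_i\varphi\to\mathrm{int}(\varphi)$; and rules: modus ponens, from $\varphi$ infer $K_i\varphi$, from $\varphi$ infer $\mathrm{int}(\varphi)$. Theorems are the members of the smallest set containing the axioms and closed under the rules. *)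

theory Defs
  imports "HOL-Analysis.Analysis"
begin

datatype ('p, 'i) fm =
    Atom 'p
  | Neg "('p, 'i) fm"
  | Conj "('p, 'i) fm" "('p, 'i) fm"
  | K 'i "('p, 'i) fm"
  | Intr "('p, 'i) fm"

definition Disj :: "('p, 'i) fm \<Rightarrow> ('p, 'i) fm \<Rightarrow> ('p, 'i) fm" where
  "Disj a b = Neg (Conj (Neg a) (Neg b))"

definition Imp :: "('p, 'i) fm \<Rightarrow> ('p, 'i) fm \<Rightarrow> ('p, 'i) fm" where
  "Imp a b = Neg (Conj a (Neg b))"

definition Iff :: "('p, 'i) fm \<Rightarrow> ('p, 'i) fm \<Rightarrow> ('p, 'i) fm" where
  "Iff a b = Conj (Imp a b) (Imp b a)"

primrec peval :: "(('p, 'i) fm \<Rightarrow> bool) \<Rightarrow> ('p, 'i) fm \<Rightarrow> bool" where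
  "peval g (Atom p) = g (Atom p)"
| "peval g (Neg a) = (\<not> peval g a)"
| "peval g (Conj a b) = (peval g a \<and> peval g b)"
| "peval g (K i a) = g (K i a)"
| "peval g (Intr a) = g (Intr a)"

definition tautology :: "('p, 'i) fm \<Rightarrow> bool" where
  "tautology a \<longleftrightarrow> (\<forall>g. peval g a)"

inductive derivable :: "('p, 'i) fm \<Rightarrow> bool" where
  Taut: "tautology a \<Longrightarrow> derivable a"
| K_K: "derivable (Imp (K i (Imp a b)) (Imp (K i a) (K i b)))"
| K_T: "derivable (Imp (K i a) a)"
| K_4: "derivable (Imp (K i a) (K i (K i a)))"
| K_5: "derivable (Imp (Neg (K i a)) (K i (Neg (K i a))))"
| Int_K: "derivable (Imp (Intr (Imp a b)) (Imp (Intr a) (Intr b)))"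
| Int_T: "derivable (Imp (Intr a) a)"
| Int_4: "derivable (Imp (Intr a) (Intr (Intr a)))"
| K_Int: "derivable (Imp (K i a) (Intr a))"
| MP: "derivable (Imp a b) \<Longrightarrow> derivable a \<Longrightarrow> derivable b"
| Nec_K: "derivable a \<Longrightarrow> derivable (K i a)"
| Nec_Int: "derivable a \<Longrightarrow> derivable (Intr a)"

text \<open>A partial function theta from X to functions (agents to open sets).\<close>
type_synonym ('w, 'i) nbf = "'w \<Rightarrow> ('i \<Rightarrow> 'w set) option"

definition nb :: "('w, 'i) nbf \<Rightarrow> 'w \<Rightarrow> 'i \<Rightarrow> 'w set" where
  "nb \<theta> x i = the (\<theta> x) i"

definition restr :: "('w, 'i) nbf \<Rightarrow> 'w set \<Rightarrow> ('w, 'i) nbf" where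
  "restr \<theta> U = (\<lambda>x. if x \<in> U then map_option (\<lambda>f i. f i \<inter> U) (\<theta> x) else None)"

definition nfs :: "'w topology \<Rightarrow> ('w, 'i) nbf set \<Rightarrow> bool" where
  "nfs T \<Phi> \<longleftrightarrow>
     (\<forall>\<theta>\<in>\<Phi>. dom \<theta> \<subseteq> topspace T \<and>
        (\<forall>x\<in>dom \<theta>. \<forall>i.
            openin T (nb \<theta> x i) \<and> x \<in> nb \<theta> x i \<and> nb \<theta> x i \<subseteq> dom \<theta> \<and>
            (\<forall>y\<in>dom \<theta>. y \<in> nb \<theta> x i \<longrightarrow> nb \<theta> x i = nb \<theta> y i)) \<and>
        (\<forall>U. openin T U \<longrightarrow> restr \<theta> U \<in> \<Phi>))"

definition topo_model :: "'w topology \<Rightarrow> ('w, 'i) nbf set \<Rightarrow> ('p \<Rightarrow> 'w set) \<Rightarrow> bool" where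
  "topo_model T \<Phi> V \<longleftrightarrow> nfs T \<Phi> \<and> (\<forall>p. V p \<subseteq> topspace T)"

primrec sat :: "'w topology \<Rightarrow> ('p \<Rightarrow> 'w set) \<Rightarrow> ('w, 'i) nbf \<Rightarrow> 'w \<Rightarrow> ('p, 'i) fm \<Rightarrow> bool" where
  "sat T V \<theta> x (Atom p) = (x \<in> V p)"
| "sat T V \<theta> x (Neg a) = (\<not> sat T V \<theta> x a)"
| "sat T V \<theta> x (Conj a b) = (sat T V \<theta> x a \<and> sat T V \<theta> x b)"
| "sat T V \<theta> x (K i a) = (\<forall>y\<in>nb \<theta> x i. sat T V \<theta> y a)"
| "sat T V \<theta> x (Intr a) = (x \<in> T interior_of {y \<in> dom \<theta>. sat T V \<theta> y a})"

definition valid_in :: "'w topology \<Rightarrow> ('w, 'i) nbf set \<Rightarrow> ('p \<Rightarrow> 'w set) \<Rightarrow> ('p, 'i) fm \<Rightarrow> bool" where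
  "valid_in T \<Phi> V a \<longleftrightarrow> (\<forall>\<theta>\<in>\<Phi>. \<forall>x\<in>dom \<theta>. sat T V \<theta> x a)"

end

theory Submission
  imports Defs
begin

text \<open>The canonical model: maximal consistent sets, preordered by inclusion of their
  \<open>int\<close>-parts, carry the Alexandroff topology of up-sets, and agent \<open>i\<close>'s neighbourhoods are
  the classes of maximal consistent sets with equal \<open>K\<^sub>i\<close>-parts. Axioms 4 and 5 for \<open>K\<^sub>i\<close>
  together with \<open>K\<^sub>i \<phi> \<rightarrow> int(\<phi>)\<close> make each such class an up-set, hence open, so the
  restrictions of this neighbourhood function to open sets form a topo-model. By the truth lemma
  a non-theorem fails at any maximal consistent extension of its negation.\<close>

instance fm :: (countable, countable) countable
  by countable_datatype

primrec imps :: "('p, 'i) fm list \<Rightarrow> ('p, 'i) fm \<Rightarrow> ('p, 'i) fm" where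
  "imps [] b = b"
| "imps (a # L) b = Imp a (imps L b)"

definition Bot :: "('p, 'i) fm" where
  "Bot = Conj (Atom undefined) (Neg (Atom undefined))"

lemma peval_Imp [simp]: "peval g (Imp a b) = (peval g a \<longrightarrow> peval g b)"
  by (simp add: Imp_def)

lemma peval_Bot [simp]: "\<not> peval g Bot"
  by (simp add: Bot_def)

lemma peval_imps [simp]: "peval g (imps L b) = ((\<forall>x\<in>set L. peval g x) \<longrightarrow> peval g b)"
  by (induction L) auto

lemma derivable_tautology: "(\<And>g. peval g b) \<Longrightarrow> derivable b"
  by (auto intro: Taut simp: tautology_def)

lemma derivable_taut_consequence:
  "derivable a \<Longrightarrow> (\<And>g. peval g a \<Longrightarrow> peval g b) \<Longrightarrow> derivable b"
  by (rule MP[of a b]) (auto intro: derivable_tautology)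

lemma derivable_taut_consequence2:
  assumes "derivable a" "derivable b" "\<And>g. peval g a \<Longrightarrow> peval g b \<Longrightarrow> peval g c"
  shows "derivable c"
proof -
  have "derivable (Imp a (Imp b c))" by (rule derivable_tautology) (auto intro: assms(3))
  then show ?thesis using assms(1,2) MP by blast
qed

section \<open>Maximal consistent sets\<close>

definition consistent :: "('p, 'i) fm set \<Rightarrow> bool" where
  "consistent S \<longleftrightarrow> (\<forall>L. set L \<subseteq> S \<longrightarrow> \<not> derivable (imps L Bot))"

definition MCS :: "('p, 'i) fm set \<Rightarrow> bool" where
  "MCS S \<longleftrightarrow> consistent S \<and> (\<forall>a. a \<in> S \<or> Neg a \<in> S)"

lemma consistent_insert_or_insert_Neg:
  assumes "consistent S"
  shows "consistent (insert a S) \<or> consistent (insert (Neg a) S)"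
proof (rule ccontr)
  assume "\<not> ?thesis"
  then obtain L1 L2 where L1: "set L1 \<subseteq> insert a S" "derivable (imps L1 Bot)"
    and L2: "set L2 \<subseteq> insert (Neg a) S" "derivable (imps L2 Bot)"
    unfolding consistent_def by blast
  let ?L = "removeAll a L1 @ removeAll (Neg a) L2"
  have "set ?L \<subseteq> S" using L1 L2 by auto
  moreover have "derivable (imps ?L Bot)"
  proof (rule derivable_taut_consequence2[OF L1(2) L2(2)])
    fix g assume "peval g (imps L1 Bot)" "peval g (imps L2 Bot)"
    then show "peval g (imps ?L Bot)" by (cases "peval g a") (use L1 L2 in auto)
  qed
  ultimately show False using assms unfolding consistent_def by blast
qed

primrec lindenbaum_chain :: "('p::countable, 'i::countable) fm set \<Rightarrow> nat \<Rightarrow> ('p, 'i) fm set" where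
  "lindenbaum_chain S 0 = S"
| "lindenbaum_chain S (Suc n) =
     (if consistent (insert (from_nat n) (lindenbaum_chain S n))
      then insert (from_nat n) (lindenbaum_chain S n)
      else insert (Neg (from_nat n)) (lindenbaum_chain S n))"

lemma consistent_lindenbaum_chain: "consistent S \<Longrightarrow> consistent (lindenbaum_chain S n)"
  by (induction n) (use consistent_insert_or_insert_Neg in auto)

lemma lindenbaum_chain_mono: "m \<le> n \<Longrightarrow> lindenbaum_chain S m \<subseteq> lindenbaum_chain S n"
  by (induction n) (auto simp: le_Suc_eq)

lemma finite_subset_lindenbaum_chain:
  "set L \<subseteq> (\<Union>n. lindenbaum_chain S n) \<Longrightarrow> \<exists>n. set L \<subseteq> lindenbaum_chain S n"
proof (induction L)
  case (Cons x L)
  then obtain n m where "set L \<subseteq> lindenbaum_chain S n" "x \<in> lindenbaum_chain S m" by auto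
  then show ?case
    using lindenbaum_chain_mono[of n "max n m" S] lindenbaum_chain_mono[of m "max n m" S]
    by (intro exI[of _ "max n m"]) auto
qed simp

lemma lindenbaum:
  assumes "consistent (S :: ('p::countable, 'i::countable) fm set)"
  obtains G where "S \<subseteq> G" "MCS G"
proof
  let ?G = "\<Union>n. lindenbaum_chain S n"
  show "S \<subseteq> ?G" using lindenbaum_chain.simps(1)[of S] by blast
  have "consistent ?G"
    unfolding consistent_def
  proof (intro allI impI)
    fix L assume "set L \<subseteq> ?G"
    then obtain n where "set L \<subseteq> lindenbaum_chain S n" using finite_subset_lindenbaum_chain by blast
    then show "\<not> derivable (imps L Bot)"
      using consistent_lindenbaum_chain[OF assms, of n] unfolding consistent_def by blast
  qed
  moreover have "a \<in> ?G \<or> Neg a \<in> ?G" for a :: "('p, 'i) fm"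
  proof -
    have "a \<in> lindenbaum_chain S (Suc (to_nat a)) \<or> Neg a \<in> lindenbaum_chain S (Suc (to_nat a))"
      by (simp split: if_split)
    then show ?thesis by blast
  qed
  ultimately show "MCS ?G" unfolding MCS_def by blast
qed

lemma consistent_Neg_if_not_derivable: "\<not> derivable a \<Longrightarrow> consistent {Neg a}"
  unfolding consistent_def
proof (intro allI impI notI)
  assume "\<not> derivable a"
  fix L assume L: "set L \<subseteq> {Neg a}" and "derivable (imps L Bot)"
  from this(2) have "derivable a"
  proof (rule derivable_taut_consequence)
    fix g assume "peval g (imps L Bot)"
    then obtain x where "x \<in> set L" "\<not> peval g x" by auto
    then show "peval g a" using L by auto
  qed
  with \<open>\<not> derivable a\<close> show False ..
qed

lemma MCS_derivable_imps: "MCS G \<Longrightarrow> set L \<subseteq> G \<Longrightarrow> derivable (imps L a) \<Longrightarrow> a \<in> G"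
proof (rule ccontr)
  assume G: "MCS G" and L: "set L \<subseteq> G" and d: "derivable (imps L a)" and "a \<notin> G"
  then have "set (Neg a # L) \<subseteq> G" unfolding MCS_def by auto
  moreover have "derivable (imps (Neg a # L) Bot)" by (rule derivable_taut_consequence[OF d]) auto
  ultimately show False using G unfolding MCS_def consistent_def by blast
qed

lemma MCS_MP: "MCS G \<Longrightarrow> derivable (Imp a b) \<Longrightarrow> a \<in> G \<Longrightarrow> b \<in> G"
  using MCS_derivable_imps[of G "[a]" b] by simp

lemma MCS_Neg: "MCS G \<Longrightarrow> Neg a \<in> G \<longleftrightarrow> a \<notin> G"
proof
  assume G: "MCS G" and "Neg a \<in> G"
  show "a \<notin> G"
  proof
    assume "a \<in> G"
    then have "set [a, Neg a] \<subseteq> G" using \<open>Neg a \<in> G\<close> by auto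
    moreover have "derivable (imps [a, Neg a] Bot)" by (rule derivable_tautology) auto
    ultimately show False using G unfolding MCS_def consistent_def by blast
  qed
qed (auto simp: MCS_def)

lemma MCS_Conj: "MCS G \<Longrightarrow> Conj a b \<in> G \<longleftrightarrow> a \<in> G \<and> b \<in> G"
proof
  assume "MCS G" "Conj a b \<in> G"
  moreover have "derivable (Imp (Conj a b) a)" "derivable (Imp (Conj a b) b)"
    by (rule derivable_tautology, simp)+
  ultimately show "a \<in> G \<and> b \<in> G" using MCS_MP[of G] by blast
next
  assume G: "MCS G" and "a \<in> G \<and> b \<in> G"
  moreover have "derivable (imps [a, b] (Conj a b))" by (rule derivable_tautology) simp
  ultimately show "Conj a b \<in> G" by (intro MCS_derivable_imps[OF G, of "[a, b]"]) simp_all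
qed

section \<open>Normal modalities in maximal consistent sets\<close>

locale normal_modality =
  fixes B :: "('p::countable, 'i::countable) fm \<Rightarrow> ('p, 'i) fm"
  assumes nec: "derivable a \<Longrightarrow> derivable (B a)"
    and dist: "derivable (Imp (B (Imp a b)) (Imp (B a) (B b)))"
begin

lemma derivable_imps_map:
  "derivable (imps P (B (imps L a))) \<Longrightarrow> derivable (imps (P @ map B L) (B a))"
proof (induction L arbitrary: P)
  case (Cons b L)
  have "derivable (imps (P @ [B b]) (B (imps L a)))"
    by (rule derivable_taut_consequence2[OF Cons.prems dist[of b "imps L a"]]) auto
  then show ?case using Cons.IH[of "P @ [B b]"] by simp
qed simp

lemma MCS_witness:
  assumes G: "MCS G" and "B a \<notin> G"
  obtains D where "MCS D" "{c. B c \<in> G} \<subseteq> D" "a \<notin> D"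
proof -
  have "consistent ({c. B c \<in> G} \<union> {Neg a})"
    unfolding consistent_def
  proof (intro allI impI notI)
    fix L assume L: "set L \<subseteq> {c. B c \<in> G} \<union> {Neg a}" and d: "derivable (imps L Bot)"
    let ?L = "removeAll (Neg a) L"
    have "derivable (imps ?L a)"
    proof (rule derivable_taut_consequence[OF d])
      fix g assume "peval g (imps L Bot)"
      then obtain x where "x \<in> set L" "\<not> peval g x" by auto
      then show "peval g (imps ?L a)" by (cases "x = Neg a") auto
    qed
    then have "derivable (imps [] (B (imps ?L a)))" by (simp add: nec)
    then have "derivable (imps ([] @ map B ?L) (B a))" by (rule derivable_imps_map)
    moreover have "set (map B ?L) \<subseteq> G" using L by auto
    ultimately show False
      using MCS_derivable_imps[OF G, of "map B ?L" "B a"] \<open>B a \<notin> G\<close> by simp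
  qed
  then obtain D where D: "{c. B c \<in> G} \<union> {Neg a} \<subseteq> D" "MCS D" by (rule lindenbaum)
  then have "a \<notin> D" using MCS_Neg[OF D(2), of a] by simp
  with D show thesis using that by blast
qed

end

interpretation K: normal_modality "K i" for i
  by unfold_locales (simp_all add: Nec_K K_K)

interpretation Intr: normal_modality Intr
  by unfold_locales (simp_all add: Nec_Int Int_K)

definition Kset :: "'i \<Rightarrow> ('p, 'i) fm set \<Rightarrow> ('p, 'i) fm set" where
  "Kset i G = {a. K i a \<in> G}"

definition Iset :: "('p, 'i) fm set \<Rightarrow> ('p, 'i) fm set" where
  "Iset G = {a. Intr a \<in> G}"

lemma Kset_eq_if_K_facts_subset:
  assumes G: "MCS G" and D: "MCS D" and sub: "{c. K i c \<in> G} \<subseteq> D"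
  shows "Kset i D = Kset i G"
proof -
  have "K i b \<in> D \<longleftrightarrow> K i b \<in> G" for b
  proof
    assume "K i b \<in> G"
    then show "K i b \<in> D" using sub MCS_MP[OF G K_4] by blast
  next
    assume "K i b \<in> D"
    show "K i b \<in> G"
    proof (rule ccontr)
      assume "K i b \<notin> G"
      then have "K i (Neg (K i b)) \<in> G" using MCS_MP[OF G K_5] MCS_Neg[OF G] by simp
      then have "Neg (K i b) \<in> D" using sub by blast
      with \<open>K i b \<in> D\<close> show False using MCS_Neg[OF D] by simp
    qed
  qed
  then show ?thesis unfolding Kset_def by simp
qed

lemma Kset_eq_if_Iset_subset:
  assumes G: "MCS G" and D: "MCS D" and "Iset G \<subseteq> Iset D"
  shows "Kset i D = Kset i G"
proof (rule Kset_eq_if_K_facts_subset[OF G D], intro subsetI CollectI, elim CollectE)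
  fix b assume "K i b \<in> G"
  then have "Intr b \<in> G" by (rule MCS_MP[OF G K_Int])
  then have "Intr b \<in> D" using \<open>Iset G \<subseteq> Iset D\<close> unfolding Iset_def by blast
  then show "b \<in> D" by (rule MCS_MP[OF D Int_T])
qed

lemma MCS_K_iff:
  fixes G :: "('p::countable, 'i::countable) fm set"
  assumes G: "MCS G"
  shows "K i a \<in> G \<longleftrightarrow> (\<forall>D. MCS D \<and> Kset i D = Kset i G \<longrightarrow> a \<in> D)"
proof
  assume "K i a \<in> G"
  show "\<forall>D. MCS D \<and> Kset i D = Kset i G \<longrightarrow> a \<in> D"
  proof (intro allI impI, elim conjE)
    fix D assume "MCS D" "Kset i D = Kset i G"
    then have "K i a \<in> D" using \<open>K i a \<in> G\<close> unfolding Kset_def by (simp add: set_eq_iff)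
    then show "a \<in> D" by (rule MCS_MP[OF \<open>MCS D\<close> K_T])
  qed
next
  assume all: "\<forall>D. MCS D \<and> Kset i D = Kset i G \<longrightarrow> a \<in> D"
  show "K i a \<in> G"
  proof (rule ccontr)
    assume "K i a \<notin> G"
    then obtain D where D: "MCS D" "{c. K i c \<in> G} \<subseteq> D" "a \<notin> D"
      by (rule K.MCS_witness[OF G])
    have "Kset i D = Kset i G" by (rule Kset_eq_if_K_facts_subset[OF G D(1,2)])
    then show False using all D by blast
  qed
qed

lemma MCS_Intr_iff:
  fixes G :: "('p::countable, 'i::countable) fm set"
  assumes G: "MCS G"
  shows "Intr a \<in> G \<longleftrightarrow> (\<forall>D. MCS D \<and> Iset G \<subseteq> Iset D \<longrightarrow> a \<in> D)"
proof
  assume "Intr a \<in> G"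
  show "\<forall>D. MCS D \<and> Iset G \<subseteq> Iset D \<longrightarrow> a \<in> D"
  proof (intro allI impI, elim conjE)
    fix D assume "MCS D" "Iset G \<subseteq> Iset D"
    then have "Intr a \<in> D" using \<open>Intr a \<in> G\<close> unfolding Iset_def by blast
    then show "a \<in> D" by (rule MCS_MP[OF \<open>MCS D\<close> Int_T])
  qed
next
  assume all: "\<forall>D. MCS D \<and> Iset G \<subseteq> Iset D \<longrightarrow> a \<in> D"
  show "Intr a \<in> G"
  proof (rule ccontr)
    assume "Intr a \<notin> G"
    then obtain D where D: "MCS D" "{c. Intr c \<in> G} \<subseteq> D" "a \<notin> D"
      by (rule Intr.MCS_witness[OF G])
    have "Iset G \<subseteq> Iset D"
    proof
      fix b assume "b \<in> Iset G"
      then have "Intr (Intr b) \<in> G" unfolding Iset_def by (simp add: MCS_MP[OF G Int_4])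
      then show "b \<in> Iset D" using D(2) unfolding Iset_def by blast
    qed
    then show False using all D by blast
  qed
qed

section \<open>Alexandroff topologies and neighbourhood function sets\<close>

definition upset :: "'a set \<Rightarrow> ('a \<Rightarrow> 'a \<Rightarrow> bool) \<Rightarrow> 'a set \<Rightarrow> bool" where
  "upset S R U \<longleftrightarrow> U \<subseteq> S \<and> (\<forall>x\<in>U. \<forall>y\<in>S. R x y \<longrightarrow> y \<in> U)"

definition alexandroff_topology :: "'a set \<Rightarrow> ('a \<Rightarrow> 'a \<Rightarrow> bool) \<Rightarrow> 'a topology" where
  "alexandroff_topology S R = topology (upset S R)"

lemma openin_alexandroff_topology: "openin (alexandroff_topology S R) = upset S R"
  unfolding alexandroff_topology_def
  by (rule topology_inverse') (unfold istopology_def upset_def, blast)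

lemma topspace_alexandroff_topology: "topspace (alexandroff_topology S R) = S"
  unfolding topspace_def openin_alexandroff_topology upset_def by auto

lemma interior_of_alexandroff_topology:
  assumes refl: "\<And>x. x \<in> S \<Longrightarrow> R x x" and trans: "\<And>x y z. R x y \<Longrightarrow> R y z \<Longrightarrow> R x z"
  shows "x \<in> alexandroff_topology S R interior_of A \<longleftrightarrow>
           x \<in> S \<and> (\<forall>y\<in>S. R x y \<longrightarrow> y \<in> A)"
proof
  assume "x \<in> alexandroff_topology S R interior_of A"
  then show "x \<in> S \<and> (\<forall>y\<in>S. R x y \<longrightarrow> y \<in> A)"
    unfolding interior_of_def openin_alexandroff_topology upset_def by blast
next
  assume x: "x \<in> S \<and> (\<forall>y\<in>S. R x y \<longrightarrow> y \<in> A)"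
  have "upset S R {y \<in> S. R x y}" unfolding upset_def using trans by blast
  moreover have "x \<in> {y \<in> S. R x y}" using x refl by blast
  ultimately show "x \<in> alexandroff_topology S R interior_of A"
    unfolding interior_of_def openin_alexandroff_topology using x by blast
qed

definition nbf_on :: "'w set \<Rightarrow> ('w \<Rightarrow> 'i \<Rightarrow> 'w set) \<Rightarrow> ('w, 'i) nbf" where
  "nbf_on W N x = (if x \<in> W then Some (N x) else None)"

lemma dom_nbf_on: "dom (nbf_on W N) = W"
  by (auto simp: nbf_on_def split: if_splits)

lemma dom_restr_nbf_on: "dom (restr (nbf_on W N) U) = W \<inter> U"
  by (auto simp: restr_def nbf_on_def split: if_splits)

lemma nb_restr_nbf_on: "x \<in> W \<Longrightarrow> x \<in> U \<Longrightarrow> nb (restr (nbf_on W N) U) x i = N x i \<inter> U"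
  by (simp add: restr_def nbf_on_def nb_def)

lemma restr_restr: "restr (restr \<theta> U) U' = restr \<theta> (U \<inter> U')"
  by (auto simp: restr_def fun_eq_iff option.map_comp comp_def Int_assoc)

lemma restr_nbf_on_self:
  assumes "\<And>x i. x \<in> W \<Longrightarrow> N x i \<subseteq> W"
  shows "restr (nbf_on W N) W = nbf_on W N"
  using assms by (auto simp: restr_def nbf_on_def fun_eq_iff Int_absorb2)

lemma nfs_restrictions_nbf_on:
  assumes W: "openin T W"
    and N: "\<And>x i. x \<in> W \<Longrightarrow> openin T (N x i) \<and> x \<in> N x i \<and> N x i \<subseteq> W"
    and N_eq: "\<And>x y i. x \<in> W \<Longrightarrow> y \<in> N x i \<Longrightarrow> N y i = N x i"
  shows "nfs T {restr (nbf_on W N) U | U. openin T U}"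
  unfolding nfs_def
proof (intro ballI conjI allI impI)
  fix \<theta> assume "\<theta> \<in> {restr (nbf_on W N) U | U. openin T U}"
  then obtain U where \<theta>: "\<theta> = restr (nbf_on W N) U" and U: "openin T U" by blast
  have dom: "dom \<theta> = W \<inter> U" using \<theta> dom_restr_nbf_on by simp
  show "dom \<theta> \<subseteq> topspace T" using dom W openin_subset by blast
  fix x i assume "x \<in> dom \<theta>"
  then have x: "x \<in> W" "x \<in> U" using dom by auto
  have nbx: "nb \<theta> x i = N x i \<inter> U" using \<theta> nb_restr_nbf_on[OF x] by simp
  show "openin T (nb \<theta> x i)" using nbx N[OF x(1)] U by auto
  show "x \<in> nb \<theta> x i" "nb \<theta> x i \<subseteq> dom \<theta>" using nbx N[OF x(1)] x dom by auto
  show "nb \<theta> x i = nb \<theta> y i" if "y \<in> dom \<theta>" "y \<in> nb \<theta> x i" for y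
  proof -
    have "y \<in> W" "y \<in> U" "y \<in> N x i" using that dom nbx by auto
    then show ?thesis using nbx \<theta> nb_restr_nbf_on[of y W U N i] N_eq[OF x(1)] by simp
  qed
next
  fix \<theta> U' assume "\<theta> \<in> {restr (nbf_on W N) U | U. openin T U}" "openin T U'"
  then show "restr \<theta> U' \<in> {restr (nbf_on W N) U | U. openin T U}"
    using restr_restr by blast
qed

section \<open>The canonical topo-model\<close>

text \<open>A maximal consistent set \<open>G\<close> is represented by the point \<open>{G}\<close>, because the points of the
  topo-models in the theorem have type \<open>('p, 'i) fm set set\<close>.\<close>

definition canon_worlds :: "('p::countable, 'i::countable) fm set set set" where
  "canon_worlds = {{G} | G. MCS G}"

definition canon_rel :: "('p, 'i) fm set set \<Rightarrow> ('p, 'i) fm set set \<Rightarrow> bool" where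
  "canon_rel w v \<longleftrightarrow> Iset (\<Union>w) \<subseteq> Iset (\<Union>v)"

definition canon_top :: "('p::countable, 'i::countable) fm set set topology" where
  "canon_top = alexandroff_topology canon_worlds canon_rel"

definition canon_nb :: "('p::countable, 'i::countable) fm set set \<Rightarrow> 'i \<Rightarrow> ('p, 'i) fm set set set" where
  "canon_nb w i = {v \<in> canon_worlds. Kset i (\<Union>v) = Kset i (\<Union>w)}"

definition canon_val :: "'p \<Rightarrow> ('p::countable, 'i::countable) fm set set set" where
  "canon_val p = {w \<in> canon_worlds. Atom p \<in> \<Union>w}"

abbreviation canon_nbf :: "(('p::countable, 'i::countable) fm set set, 'i) nbf" where
  "canon_nbf \<equiv> nbf_on canon_worlds canon_nb"

definition canon_nbfs :: "(('p::countable, 'i::countable) fm set set, 'i) nbf set" where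
  "canon_nbfs = {restr canon_nbf U | U. openin canon_top U}"

lemma singleton_in_canon_worlds_iff: "{G} \<in> canon_worlds \<longleftrightarrow> MCS G"
  by (auto simp: canon_worlds_def)

lemma Ball_canon_worlds: "(\<forall>v\<in>canon_worlds. P v) \<longleftrightarrow> (\<forall>D. MCS D \<longrightarrow> P {D})"
  by (auto simp: canon_worlds_def)

lemma Ball_canon_nb:
  "(\<forall>v\<in>canon_nb {G} i. P v) \<longleftrightarrow> (\<forall>D. MCS D \<and> Kset i D = Kset i G \<longrightarrow> P {D})"
  by (auto simp: canon_nb_def canon_worlds_def)

lemma openin_canon_top: "openin canon_top = upset canon_worlds canon_rel"
  by (simp add: canon_top_def openin_alexandroff_topology)

lemma openin_canon_worlds: "openin canon_top canon_worlds"
  unfolding openin_canon_top upset_def by blast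

lemma interior_of_canon_top:
  "w \<in> canon_top interior_of A \<longleftrightarrow> w \<in> canon_worlds \<and> (\<forall>v\<in>canon_worlds. canon_rel w v \<longrightarrow> v \<in> A)"
  unfolding canon_top_def by (rule interior_of_alexandroff_topology) (auto simp: canon_rel_def)

lemma openin_canon_nb: "openin canon_top (canon_nb w i)"
  unfolding openin_canon_top upset_def
proof (intro conjI ballI impI)
  show "canon_nb w i \<subseteq> canon_worlds" by (auto simp: canon_nb_def)
  fix v u assume v: "v \<in> canon_nb w i" and u: "u \<in> canon_worlds" and "canon_rel v u"
  obtain G D where "v = {G}" "MCS G" "u = {D}" "MCS D"
    using v u by (auto simp: canon_nb_def canon_worlds_def)
  then have "Kset i (\<Union>u) = Kset i (\<Union>v)"
    using Kset_eq_if_Iset_subset \<open>canon_rel v u\<close> by (simp add: canon_rel_def)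
  then show "u \<in> canon_nb w i" using u v by (simp add: canon_nb_def)
qed

lemma topo_model_canon: "topo_model canon_top canon_nbfs canon_val"
proof -
  have "nfs canon_top canon_nbfs"
    unfolding canon_nbfs_def using openin_canon_worlds
    by (rule nfs_restrictions_nbf_on) (use openin_canon_nb in \<open>auto simp: canon_nb_def\<close>)
  then show ?thesis
    by (auto simp: topo_model_def canon_top_def topspace_alexandroff_topology canon_val_def)
qed

lemma canon_nbf_in_canon_nbfs: "canon_nbf \<in> canon_nbfs"
  unfolding canon_nbfs_def
proof (intro CollectI exI conjI)
  show "canon_nbf = restr canon_nbf canon_worlds"
    by (rule restr_nbf_on_self[symmetric]) (auto simp: canon_nb_def)
qed (rule openin_canon_worlds)

lemma truth_lemma:
  "MCS G \<Longrightarrow> sat canon_top canon_val canon_nbf {G} a \<longleftrightarrow> a \<in> G"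
proof (induction a arbitrary: G)
  case (Atom p)
  then show ?case by (simp add: canon_val_def singleton_in_canon_worlds_iff)
next
  case (Neg a)
  then show ?case by (simp add: MCS_Neg)
next
  case (Conj a b)
  then show ?case by (simp add: MCS_Conj)
next
  case (K i a)
  have "nb canon_nbf {G} i = canon_nb {G} i"
    using K.prems by (simp add: nbf_on_def nb_def singleton_in_canon_worlds_iff)
  then have "sat canon_top canon_val canon_nbf {G} (K i a) \<longleftrightarrow>
             (\<forall>D. MCS D \<and> Kset i D = Kset i G \<longrightarrow> sat canon_top canon_val canon_nbf {D} a)"
    by (simp add: Ball_canon_nb)
  also have "\<dots> \<longleftrightarrow> K i a \<in> G"
    using K.IH MCS_K_iff[OF K.prems] by blast
  finally show ?case .
next
  case (Intr a)
  have "sat canon_top canon_val canon_nbf {G} (Intr a) \<longleftrightarrow>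
          {G} \<in> canon_top interior_of {v \<in> canon_worlds. sat canon_top canon_val canon_nbf v a}"
    by (simp add: dom_nbf_on)
  also have "\<dots> \<longleftrightarrow> (\<forall>D. MCS D \<and> Iset G \<subseteq> Iset D \<longrightarrow> sat canon_top canon_val canon_nbf {D} a)"
    using Intr.prems
    by (auto simp: interior_of_canon_top Ball_canon_worlds canon_rel_def singleton_in_canon_worlds_iff)
  also have "\<dots> \<longleftrightarrow> Intr a \<in> G"
    using Intr.IH MCS_Intr_iff[OF Intr.prems] by blast
  finally show ?case .
qed

theorem theorem2:
  fixes \<phi> :: "('p :: countable, 'i :: finite) fm"
  assumes "\<forall>(T :: ('p, 'i) fm set set topology) \<Phi> V.
             topo_model T \<Phi> V \<longrightarrow> valid_in T \<Phi> V \<phi>"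
  shows "derivable \<phi>"
proof (rule ccontr)
  assume "\<not> derivable \<phi>"
  then have "consistent {Neg \<phi>}" by (rule consistent_Neg_if_not_derivable)
  then obtain G where G: "{Neg \<phi>} \<subseteq> G" "MCS G" by (rule lindenbaum)
  have "valid_in canon_top canon_nbfs canon_val \<phi>"
    using assms[rule_format, OF topo_model_canon] .
  then have "\<forall>w\<in>dom canon_nbf. sat canon_top canon_val canon_nbf w \<phi>"
    using canon_nbf_in_canon_nbfs unfolding valid_in_def by (rule bspec)
  moreover have "{G} \<in> dom canon_nbf" by (simp add: dom_nbf_on singleton_in_canon_worlds_iff G(2))
  ultimately have "sat canon_top canon_val canon_nbf {G} \<phi>" by (rule bspec)
  then show False using truth_lemma[OF G(2)] MCS_Neg[OF G(2)] G(1) by simp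
qed

end
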